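(* The horizontal monoidal category $H(\mathsf{sInst})$ of the double category of simplicial instruments can be identified with the monoidal category $(\mathsf{Chan},\otimes,\mathbb C)$ of finite-dimensional Hilbert spaces and channels, via the identification of simplicial instruments $\Delta^0\to\mathcal{CP}_{V,W}(\Delta^0)$ with channels $V\to W$; and the vertical monoidal category $V(\mathsf{sInst})$ can be identified with the Kleisli category $\mathsf{sSet}_D$ of the levelwise distribution monad on simplicial sets (with monoidal product given on objects by the product of simplicial sets), via the identification $\mathcal{CP}_{\mathbb C,\mathbb C}(Y)\cong D(Y)$ induced by $\operatorname{CP}(\mathbb C,\mathbb C)\cong\mathbb R_{\ge0}$.
   Context: All Hilbert spaces are finite-dimensional; $\operatorname{CP}(V,W)$ denotes completely positive maps $L(V)\to L(W)$ and channels are trace-preserving ones. For a set $S$, $\mathcal{CP}_{V,W}(S)$ is the set of finitely supported $\Phi:S\to\operatorname{CP}(V,W)$ with $\sum_s\Phi^s$ a channel, functorial in $S$ by $(f_*\Phi)^t=\sum_{f(s)=t}\Phi^s$; it is extended levelwise to simplicial sets. A simplicial instrument is a simplicial map $\Phi:X\to\mathcal{CP}_{V,W}(Y)$. The double category $\mathsf{sInst}$ has one object, vertical morphisms Hilbert spaces, horizontal morphisms simplicial sets, and squares (with horizontal boundaries $X$ above, $Y$ below, vertical boundaries $V$, $W$) the simplicial instruments $X\to\mathcal{CP}_{V,W}(Y)$. Horizontal composition: for $\Phi:X_1\to\mathcal{CP}_{V,W}(Y_1)$, $\Psi:X_2\to\mathcal{CP}_{W,U}(Y_2)$, $(\Psi\circ\Phi)_{(x_1,x_2)}^{(y_1,y_2)}=\Psi_{x_2}^{y_2}\circ\Phi_{x_1}^{y_1}$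 on $X_1\times X_2\to\mathcal{CP}_{V,U}(Y_1\times Y_2)$. Vertical composition: for $\Phi:X\to\mathcal{CP}_{V_1,W_1}(Y)$, $\Psi:Y\to\mathcal{CP}_{V_2,W_2}(Z)$, $(\Psi\bullet\Phi)_x^z=\sum_{y\in Y_n}\Phi_x^y\otimes\Psi_y^z$. The horizontal identity is the terminal simplicial set $\Delta^0$ (one simplex in each degree), and the vertical identity is $\mathbb C$. The horizontal monoidal category $H(\mathsf{sInst})$ has objects the Hilbert spaces, morphisms $V\to W$ the squares with both horizontal boundaries $\Delta^0$, composition by horizontal composition and tensor product by vertical composition. The vertical monoidal category $V(\mathsf{sInst})$ has objects simplicial sets, morphisms $X\to Y$ the squares with both vertical boundaries $\mathbb C$, composition by vertical composition and tensor product by horizontal composition. $D$ is the distribution monad ($D(S)$ = finitely supported probability distributions on $S$) applied levelwise to simplicial sets; $\mathsf{sSet}_D$ is its Kleisli category, with objects simplicial sets and morphisms simplicial maps $X\to D(Y)$. *)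

theory Defs
  imports Complex_Main "HOL-Library.Function_Algebras" "HOL-Library.FuncSet"
    "HOL-Probability.Probability_Mass_Function"
begin

text \<open>A finite-dimensional Hilbert space is represented (up to unitary isomorphism) by its
dimension n, i.e. by C^n.  An operator in L(C^n) is a function nat => nat => complex that
vanishes outside the index range {0..<n} x {0..<n}.  A linear map L(C^V) -> L(C^W)
(a superoperator) is a function on such matrices, normalised so that it only depends on
the truncation of its argument to V x V and always returns an element of L(C^W).\<close>

type_synonym cmat = "nat \<Rightarrow> nat \<Rightarrow> complex"
type_synonym sop = "cmat \<Rightarrow> cmat"

definition mats :: "nat \<Rightarrow> cmat set" where
  "mats n = {M. \<forall>i j. (n \<le> i \<or> n \<le> j) \<longrightarrow> M i j = 0}"

definition trunc :: "nat \<Rightarrow> cmat \<Rightarrow> cmat" where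
  "trunc n M = (\<lambda>i j. if i < n \<and> j < n then M i j else 0)"

definition smul :: "complex \<Rightarrow> cmat \<Rightarrow> cmat" where
  "smul c M = (\<lambda>i j. c * M i j)"

definition superop :: "nat \<Rightarrow> nat \<Rightarrow> sop \<Rightarrow> bool" where
  "superop V W \<Phi> \<longleftrightarrow> (\<forall>M. \<Phi> M \<in> mats W) \<and> (\<forall>M. \<Phi> M = \<Phi> (trunc V M))
     \<and> (\<forall>M N. \<Phi> (M + N) = \<Phi> M + \<Phi> N) \<and> (\<forall>c M. \<Phi> (smul c M) = smul c (\<Phi> M))"

definition psd :: "nat \<Rightarrow> cmat \<Rightarrow> bool" where
  "psd n M \<longleftrightarrow> M \<in> mats n \<and>
     (\<forall>v :: nat \<Rightarrow> complex. let q = (\<Sum>i<n. \<Sum>j<n. cnj (v i) * M i j * v j) in Im q = 0 \<and> 0 \<le> Re q)"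

text \<open>The amplification id_{L(C^k)} (x) Phi, with C^k (x) C^n identified with C^(k*n)
(index p*n + a for p < k, a < n).\<close>
definition ampl :: "nat \<Rightarrow> nat \<Rightarrow> nat \<Rightarrow> sop \<Rightarrow> sop" where
  "ampl k V W \<Phi> M = (\<lambda>i j. if i < k * W \<and> j < k * W then
       \<Phi> (\<lambda>a b. if a < V \<and> b < V then M ((i div W) * V + a) ((j div W) * V + b) else 0)
         (i mod W) (j mod W) else 0)"

definition CP :: "nat \<Rightarrow> nat \<Rightarrow> sop \<Rightarrow> bool" where
  "CP V W \<Phi> \<longleftrightarrow> superop V W \<Phi> \<and> (\<forall>k M. psd (k * V) M \<longrightarrow> psd (k * W) (ampl k V W \<Phi> M))"

definition tr :: "nat \<Rightarrow> cmat \<Rightarrow> complex" where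
  "tr n M = (\<Sum>i<n. M i i)"

definition channel :: "nat \<Rightarrow> nat \<Rightarrow> sop \<Rightarrow> bool" where
  "channel V W \<Phi> \<longleftrightarrow> CP V W \<Phi> \<and> (\<forall>M \<in> mats V. tr W (\<Phi> M) = tr V M)"

text \<open>Kronecker product of operators: C^n (x) C^m = C^(n*m), index a*m + c.\<close>
definition kron :: "nat \<Rightarrow> nat \<Rightarrow> cmat \<Rightarrow> cmat \<Rightarrow> cmat" where
  "kron n m A B = (\<lambda>i j. if i < n * m \<and> j < n * m
       then A (i div m) (j div m) * B (i mod m) (j mod m) else 0)"

definition unitmat :: "nat \<Rightarrow> nat \<Rightarrow> cmat" where
  "unitmat a b = (\<lambda>i j. if i = a \<and> j = b then 1 else 0)"

text \<open>Tensor product of superoperators Phi : L(C^V1) -> L(C^W1), Psi : L(C^V2) -> L(C^W2):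
the unique linear map with (Phi (x) Psi)(A (x) B) = Phi A (x) Psi B.\<close>
definition stensor :: "nat \<Rightarrow> nat \<Rightarrow> nat \<Rightarrow> nat \<Rightarrow> sop \<Rightarrow> sop \<Rightarrow> sop" where
  "stensor V1 W1 V2 W2 \<Phi> \<Psi> M =
     (\<Sum>a<V1. \<Sum>b<V1. \<Sum>c<V2. \<Sum>d<V2.
        smul (M (a * V2 + c) (b * V2 + d)) (kron W1 W2 (\<Phi> (unitmat a b)) (\<Psi> (unitmat c d))))"

text \<open>A simplicial set with simplices drawn from a type 'a: the sets X_n, faces
d^n_i : X_n -> X_(n-1) (n >= 1, i <= n) and degeneracies s^n_i : X_n -> X_(n+1) (i <= n).\<close>
record 'a sset =
  simp :: "nat \<Rightarrow> 'a set"
  face :: "nat \<Rightarrow> nat \<Rightarrow> 'a \<Rightarrow> 'a"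
  degen :: "nat \<Rightarrow> nat \<Rightarrow> 'a \<Rightarrow> 'a"

definition is_sset :: "'a sset \<Rightarrow> bool" where
  "is_sset X \<longleftrightarrow>
    (\<forall>n i x. 1 \<le> n \<and> i \<le> n \<and> x \<in> simp X n \<longrightarrow> face X n i x \<in> simp X (n - 1)) \<and>
    (\<forall>n i x. i \<le> n \<and> x \<in> simp X n \<longrightarrow> degen X n i x \<in> simp X (Suc n)) \<and>
    (\<forall>n i j x. 2 \<le> n \<and> i < j \<and> j \<le> n \<and> x \<in> simp X n \<longrightarrow>
       face X (n - 1) i (face X n j x) = face X (n - 1) (j - 1) (face X n i x)) \<and>
    (\<forall>n i j x. 1 \<le> n \<and> i < j \<and> j \<le> n \<and> x \<in> simp X n \<longrightarrow>
       face X (Suc n) i (degen X n j x) = degen X (n - 1) (j - 1) (face X n i x)) \<and>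
    (\<forall>n j x. j \<le> n \<and> x \<in> simp X n \<longrightarrow>
       face X (Suc n) j (degen X n j x) = x \<and> face X (Suc n) (Suc j) (degen X n j x) = x) \<and>
    (\<forall>n i j x. 1 \<le> n \<and> Suc j < i \<and> i \<le> Suc n \<and> x \<in> simp X n \<longrightarrow>
       face X (Suc n) i (degen X n j x) = degen X (n - 1) j (face X n (i - 1) x)) \<and>
    (\<forall>n i j x. i \<le> j \<and> j \<le> n \<and> x \<in> simp X n \<longrightarrow>
       degen X (Suc n) i (degen X n j x) = degen X (Suc n) (Suc j) (degen X n i x))"

definition Delta0 :: "unit sset" where
  "Delta0 = \<lparr>simp = (\<lambda>n. UNIV), face = (\<lambda>n i x. ()), degen = (\<lambda>n i x. ())\<rparr>"

definition sprod :: "'a sset \<Rightarrow> 'b sset \<Rightarrow> ('a \<times> 'b) sset" where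
  "sprod X Y = \<lparr>simp = (\<lambda>n. simp X n \<times> simp Y n),
     face = (\<lambda>n i (x, y). (face X n i x, face Y n i y)),
     degen = (\<lambda>n i (x, y). (degen X n i x, degen Y n i y))\<rparr>"

definition CPfam :: "nat \<Rightarrow> nat \<Rightarrow> 'b set \<Rightarrow> ('b \<Rightarrow> sop) set" where
  "CPfam V W S = {\<Phi>. finite {s. \<Phi> s \<noteq> 0} \<and> {s. \<Phi> s \<noteq> 0} \<subseteq> S \<and>
       (\<forall>s. CP V W (\<Phi> s)) \<and> channel V W (\<Sum>s | \<Phi> s \<noteq> 0. \<Phi> s)}"

definition push :: "('b \<Rightarrow> 'c) \<Rightarrow> ('b \<Rightarrow> sop) \<Rightarrow> 'c \<Rightarrow> sop" where
  "push f \<Phi> t = (\<Sum>s | \<Phi> s \<noteq> 0 \<and> f s = t. \<Phi> s)"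

text \<open>Simplicial instruments X -> CP_{V,W}(Y), i.e. simplicial maps; as usual for
functions on a carrier, the value outside X_n is fixed to undefined.\<close>
definition sinst :: "nat \<Rightarrow> nat \<Rightarrow> 'a sset \<Rightarrow> 'b sset \<Rightarrow> (nat \<Rightarrow> 'a \<Rightarrow> 'b \<Rightarrow> sop) set" where
  "sinst V W X Y = {\<Phi>.
     (\<forall>n. \<Phi> n \<in> extensional (simp X n)) \<and>
     (\<forall>n x. x \<in> simp X n \<longrightarrow> \<Phi> n x \<in> CPfam V W (simp Y n)) \<and>
     (\<forall>n i x. 1 \<le> n \<and> i \<le> n \<and> x \<in> simp X n \<longrightarrow>
        \<Phi> (n - 1) (face X n i x) = push (face Y n i) (\<Phi> n x)) \<and>
     (\<forall>n i x. i \<le> n \<and> x \<in> simp X n \<longrightarrow>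
        \<Phi> (Suc n) (degen X n i x) = push (degen Y n i) (\<Phi> n x))}"

text \<open>Horizontal composition of squares (product of horizontal boundaries).\<close>
definition hcomp :: "'a1 sset \<Rightarrow> 'a2 sset \<Rightarrow> (nat \<Rightarrow> 'a1 \<Rightarrow> 'b1 \<Rightarrow> sop) \<Rightarrow> (nat \<Rightarrow> 'a2 \<Rightarrow> 'b2 \<Rightarrow> sop)
     \<Rightarrow> nat \<Rightarrow> 'a1 \<times> 'a2 \<Rightarrow> 'b1 \<times> 'b2 \<Rightarrow> sop" where
  "hcomp X1 X2 \<Phi> \<Psi> n = (\<lambda>(x1, x2) \<in> simp X1 n \<times> simp X2 n.
      \<lambda>(y1, y2). \<Psi> n x2 y2 \<circ> \<Phi> n x1 y1)"

text \<open>Vertical composition of squares (tensor product of vertical boundaries).\<close>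
definition vcomp :: "nat \<Rightarrow> nat \<Rightarrow> nat \<Rightarrow> nat \<Rightarrow> 'a sset \<Rightarrow> (nat \<Rightarrow> 'a \<Rightarrow> 'b \<Rightarrow> sop)
     \<Rightarrow> (nat \<Rightarrow> 'b \<Rightarrow> 'c \<Rightarrow> sop) \<Rightarrow> nat \<Rightarrow> 'a \<Rightarrow> 'c \<Rightarrow> sop" where
  "vcomp V1 W1 V2 W2 X \<Phi> \<Psi> n = (\<lambda>x \<in> simp X n. \<lambda>z.
      \<Sum>y | \<Phi> n x y \<noteq> 0. stensor V1 W1 V2 W2 (\<Phi> n x y) (\<Psi> n y z))"

text \<open>Horizontal identity square on the vertical morphism V (boundaries Delta^0).\<close>
definition hid :: "nat \<Rightarrow> nat \<Rightarrow> unit \<Rightarrow> unit \<Rightarrow> sop" where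
  "hid V = (\<lambda>n x y. trunc V)"

text \<open>Vertical identity square on the horizontal morphism X (vertical boundaries C).\<close>
definition vid :: "'a sset \<Rightarrow> nat \<Rightarrow> 'a \<Rightarrow> 'a \<Rightarrow> sop" where
  "vid X n = (\<lambda>x \<in> simp X n. \<lambda>y. if y = x then trunc 1 else 0)"

definition Dset :: "'b set \<Rightarrow> 'b pmf set" where
  "Dset S = {p. finite (set_pmf p) \<and> set_pmf p \<subseteq> S}"

definition kmaps :: "'a sset \<Rightarrow> 'b sset \<Rightarrow> (nat \<Rightarrow> 'a \<Rightarrow> 'b pmf) set" where
  "kmaps X Y = {f.
     (\<forall>n. f n \<in> extensional (simp X n)) \<and>
     (\<forall>n x. x \<in> simp X n \<longrightarrow> f n x \<in> Dset (simp Y n)) \<and>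
     (\<forall>n i x. 1 \<le> n \<and> i \<le> n \<and> x \<in> simp X n \<longrightarrow>
        f (n - 1) (face X n i x) = map_pmf (face Y n i) (f n x)) \<and>
     (\<forall>n i x. i \<le> n \<and> x \<in> simp X n \<longrightarrow>
        f (Suc n) (degen X n i x) = map_pmf (degen Y n i) (f n x))}"

definition kcomp :: "'a sset \<Rightarrow> (nat \<Rightarrow> 'a \<Rightarrow> 'b pmf) \<Rightarrow> (nat \<Rightarrow> 'b \<Rightarrow> 'c pmf) \<Rightarrow> nat \<Rightarrow> 'a \<Rightarrow> 'c pmf" where
  "kcomp X f g n = (\<lambda>x \<in> simp X n. bind_pmf (f n x) (g n))"

definition kid :: "'a sset \<Rightarrow> nat \<Rightarrow> 'a \<Rightarrow> 'a pmf" where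
  "kid X n = (\<lambda>x \<in> simp X n. return_pmf x)"

definition kprod :: "'a1 sset \<Rightarrow> 'a2 sset \<Rightarrow> (nat \<Rightarrow> 'a1 \<Rightarrow> 'b1 pmf) \<Rightarrow> (nat \<Rightarrow> 'a2 \<Rightarrow> 'b2 pmf)
     \<Rightarrow> nat \<Rightarrow> 'a1 \<times> 'a2 \<Rightarrow> ('b1 \<times> 'b2) pmf" where
  "kprod X1 X2 f g n = (\<lambda>(x1, x2) \<in> simp X1 n \<times> simp X2 n. pair_pmf (f n x1) (g n x2))"

text \<open>Simplicial instruments Delta^0 -> CP_{V,W}(Delta^0) give channels V -> W
(the value on the unique simplex; by simpliciality all levels agree).\<close>
definition chan_of :: "(nat \<Rightarrow> unit \<Rightarrow> unit \<Rightarrow> sop) \<Rightarrow> sop" where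
  "chan_of \<Phi> = \<Phi> 0 () ()"

text \<open>CP(C,C) = R_{>=0} via Phi |-> Phi(1); this induces CP_{C,C}(Y) = D(Y).\<close>
definition scalar_of :: "sop \<Rightarrow> real" where
  "scalar_of \<Phi> = Re (\<Phi> (unitmat 0 0) 0 0)"

definition dist_of :: "'a sset \<Rightarrow> (nat \<Rightarrow> 'a \<Rightarrow> 'b \<Rightarrow> sop) \<Rightarrow> nat \<Rightarrow> 'a \<Rightarrow> 'b pmf" where
  "dist_of X \<Phi> n = (\<lambda>x \<in> simp X n. embed_pmf (\<lambda>y. scalar_of (\<Phi> n x y)))"

end

(*
  With trivial horizontal boundaries, the degeneracies of Delta^0 force a simplicial
  instrument to be the same channel in every degree, so squares are channels; horizontal
  composition is composition of channels and vertical composition is their tensor product.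
  That the tensor product of channels is again completely positive follows because
  id_k (x) (phi (x) psi) factors, up to permutations of tensor factors, through
  id (x) psi and id (x) phi.

  With trivial vertical boundaries, complete positivity identifies CP(C,C) with the
  nonnegative reals via phi |-> phi(1), and trace preservation makes the weights of an
  element of CP_{C,C}(S) sum to one; so such families are exactly finitely supported
  distributions, pushforward becomes map_pmf, and simplicial instruments X -> CP_{C,C}(Y)
  are simplicial maps X -> D(Y).  Under this dictionary vertical composition
  (sum over y of p(y) q_y(z)) is Kleisli composition, horizontal composition is the product
  of distributions and the vertical identity is the Dirac distribution.
*)
theory Submission
  imports Defs "HOL-Library.Complex_Order"
begin

section \<open>Matrices and superoperators\<close>

lemma sum_fun_apply: "sum f A x = (\<Sum>a\<in>A. f a x)"
  by (induct A rule: infinite_finite_induct) auto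

lemma superop_add: "superop V W \<phi> \<Longrightarrow> \<phi> (M + N) = \<phi> M + \<phi> N"
  by (simp add: superop_def)

lemma superop_zero: "superop V W \<phi> \<Longrightarrow> \<phi> 0 = 0"
  using superop_add[of V W \<phi> 0 0] by simp

lemma superop_sum: "superop V W \<phi> \<Longrightarrow> \<phi> (sum f A) = (\<Sum>a\<in>A. \<phi> (f a))"
  by (induct A rule: infinite_finite_induct) (simp_all add: superop_zero superop_add fun_eq_iff)

lemma trunc_eq_sum_unitmat: "trunc V M = (\<Sum>a<V. \<Sum>b<V. smul (M a b) (unitmat a b))"
proof (intro ext)
  fix i j
  have "(\<Sum>b<V. smul (M a b) (unitmat a b) i j) =
      (if a = i then (if j < V then M i j else 0) else 0)" for a
    by (cases "a = i") (simp_all add: smul_def unitmat_def sum.delta' if_distrib cong: if_cong)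
  then show "trunc V M i j = (\<Sum>a<V. \<Sum>b<V. smul (M a b) (unitmat a b)) i j"
    by (simp add: trunc_def sum_fun_apply sum.delta')
qed

lemma superop_apply_expand:
  assumes "superop V W \<phi>"
  shows "\<phi> M i j = (\<Sum>a<V. \<Sum>b<V. M a b * \<phi> (unitmat a b) i j)"
proof -
  have "\<phi> M = \<phi> (trunc V M)"
    using assms by (simp add: superop_def)
  also have "\<dots> = (\<Sum>a<V. \<Sum>b<V. \<phi> (smul (M a b) (unitmat a b)))"
    by (simp add: trunc_eq_sum_unitmat superop_sum[OF assms])
  also have "\<dots> = (\<Sum>a<V. \<Sum>b<V. smul (M a b) (\<phi> (unitmat a b)))"
    using assms by (simp add: superop_def)
  finally show ?thesis
    by (simp add: sum_fun_apply smul_def)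
qed

lemma mixed_radix_cases:
  fixes i k n m :: nat
  assumes "i < k * n * m"
  obtains p a c where "i = (p * n + a) * m + c" "p < k" "a < n" "c < m"
proof
  have "0 < m" "0 < n"
    using assms by (auto intro!: Nat.gr0I)
  then show "i div m div n < k" "i mod m < m" "i div m mod n < n"
    using assms by (auto simp: less_mult_imp_div_less div_mult2_eq mult.commute mult.left_commute)
qed simp

lemma mixed_radix_less: "p < m \<Longrightarrow> c < n \<Longrightarrow> p * n + c < m * (n::nat)"
  using mult_le_mono1[of "Suc p" m n] by simp

lemma mixed_radix_assoc: "p * (n * m) + (a * m + c) = (p * n + a) * m + (c::nat)"
  by (simp add: algebra_simps)

lemma sum_lessThan_mult: "(\<Sum>i<m * n. f i) = (\<Sum>p<m. \<Sum>c<(n::nat). f (p * n + c))"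
proof -
  have "(\<Sum>i\<in>{p * n..<p * n + n}. f i) = (\<Sum>c<n. f (p * n + c))" for p
    using sum.shift_bounds_nat_ivl[of f 0 "p * n" n] by (simp add: atLeast0LessThan add.commute)
  then show ?thesis
    using sum.nat_group[of f n m] by simp
qed

lemma sum_lessThan_mult_of_bool:
  fixes f :: "nat \<Rightarrow> 'a::semiring_1"
  assumes "a < n"
  shows "(\<Sum>b<n. f b * of_bool (a = b)) = f a"
proof -
  have "(\<Sum>b<n. f b * of_bool (a = b)) = sum f ({..<n} \<inter> {b. a = b})"
    by (rule sum_mult_of_bool_eq) simp
  also have "{..<n} \<inter> {b. a = b} = {a}"
    using assms by auto
  finally show ?thesis
    by simp
qed

lemma ampl_apply:
  assumes "p < k" "a < W" "q < k" "b < W"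
  shows "ampl k V W \<phi> M (p * W + a) (q * W + b) =
    \<phi> (\<lambda>c d. if c < V \<and> d < V then M (p * V + c) (q * V + d) else 0) a b"
  using assms by (simp add: ampl_def mixed_radix_less cong: if_cong)

lemma ampl_apply_expand:
  assumes "superop V W \<phi>" "p < k" "a < W" "q < k" "b < W"
  shows "ampl k V W \<phi> M (p * W + a) (q * W + b) =
    (\<Sum>c<V. \<Sum>d<V. M (p * V + c) (q * V + d) * \<phi> (unitmat c d) a b)"
proof -
  have "ampl k V W \<phi> M (p * W + a) (q * W + b) =
      \<phi> (\<lambda>c d. if c < V \<and> d < V then M (p * V + c) (q * V + d) else 0) a b"
    by (rule ampl_apply[OF assms(2-5)])
  also have "\<dots> = (\<Sum>c<V. \<Sum>d<V.
      (if c < V \<and> d < V then M (p * V + c) (q * V + d) else 0) * \<phi> (unitmat c d) a b)"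
    by (rule superop_apply_expand[OF assms(1)])
  finally show ?thesis
    by simp
qed

lemma CP_ampl: "CP V W \<phi> \<Longrightarrow> psd (k * V) M \<Longrightarrow> psd (k * W) (ampl k V W \<phi> M)"
  by (simp add: CP_def)

section \<open>Tensor products of channels\<close>

definition quad_form :: "nat \<Rightarrow> cmat \<Rightarrow> (nat \<Rightarrow> complex) \<Rightarrow> complex" where
  "quad_form n M v = (\<Sum>i<n. \<Sum>j<n. cnj (v i) * M i j * v j)"

lemma psd_iff_quad_form: "psd n M \<longleftrightarrow> M \<in> mats n \<and> (\<forall>v. 0 \<le> quad_form n M v)"
  by (auto simp: psd_def quad_form_def less_eq_complex_def Let_def)

definition reindex_mat :: "nat \<Rightarrow> (nat \<Rightarrow> nat) \<Rightarrow> cmat \<Rightarrow> cmat" where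
  "reindex_mat n \<sigma> M = (\<lambda>i j. if i < n \<and> j < n then M (\<sigma> i) (\<sigma> j) else 0)"

lemma psd_reindex_mat:
  assumes "psd n' M" "bij_betw \<sigma> {..<n} {..<n'}"
  shows "psd n (reindex_mat n \<sigma> M)"
  unfolding psd_iff_quad_form
proof (intro conjI allI)
  show "reindex_mat n \<sigma> M \<in> mats n"
    by (simp add: reindex_mat_def mats_def)
  fix v :: "nat \<Rightarrow> complex"
  define w where "w = v \<circ> inv_into {..<n} \<sigma>"
  have w: "w (\<sigma> i) = v i" if "i < n" for i
    using that bij_betw_inv_into_left[OF assms(2)] by (simp add: w_def)
  have "quad_form n' M w = (\<Sum>i<n. \<Sum>j<n. cnj (w (\<sigma> i)) * M (\<sigma> i) (\<sigma> j) * w (\<sigma> j))"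
    unfolding quad_form_def sum.reindex_bij_betw[OF assms(2), symmetric] ..
  also have "\<dots> = quad_form n (reindex_mat n \<sigma> M) v"
    by (simp add: quad_form_def reindex_mat_def w)
  finally show "0 \<le> quad_form n (reindex_mat n \<sigma> M) v"
    using assms(1) by (metis psd_iff_quad_form)
qed

definition swap_digits :: "nat \<Rightarrow> nat \<Rightarrow> nat \<Rightarrow> nat" where
  "swap_digits n m i = ((i div m) div n * m + i mod m) * n + (i div m) mod n"

lemma swap_digits_eq: "a < n \<Longrightarrow> c < m \<Longrightarrow> swap_digits n m ((p * n + a) * m + c) = (p * m + c) * n + a"
  by (simp add: swap_digits_def)

lemma bij_betw_swap_digits: "bij_betw (swap_digits n m) {..<k * n * m} {..<k * m * n}"
proof (rule bij_betw_byWitness[where f' = "swap_digits m n"])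
  show "\<forall>i\<in>{..<k * n * m}. swap_digits m n (swap_digits n m i) = i"
    by (auto elim!: mixed_radix_cases simp: swap_digits_eq)
  show "\<forall>i\<in>{..<k * m * n}. swap_digits n m (swap_digits m n i) = i"
    by (auto elim!: mixed_radix_cases simp: swap_digits_eq)
  show "swap_digits n m ` {..<k * n * m} \<subseteq> {..<k * m * n}"
    by (auto elim!: mixed_radix_cases simp: swap_digits_eq mixed_radix_less)
  show "swap_digits m n ` {..<k * m * n} \<subseteq> {..<k * n * m}"
    by (auto elim!: mixed_radix_cases simp: swap_digits_eq mixed_radix_less)
qed

lemma stensor_apply:
  "stensor V1 W1 V2 W2 \<phi> \<psi> M i j = (if i < W1 * W2 \<and> j < W1 * W2 then
     (\<Sum>a<V1. \<Sum>b<V1. \<Sum>c<V2. \<Sum>d<V2. M (a * V2 + c) (b * V2 + d) *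
        (\<phi> (unitmat a b) (i div W2) (j div W2) * \<psi> (unitmat c d) (i mod W2) (j mod W2))) else 0)"
  by (cases "i < W1 * W2 \<and> j < W1 * W2") (auto simp: stensor_def sum_fun_apply smul_def kron_def)

lemma superop_stensor: "superop (V1 * V2) (W1 * W2) (stensor V1 W1 V2 W2 \<phi> \<psi>)"
  unfolding superop_def
  by (auto simp: mats_def fun_eq_iff stensor_apply trunc_def mixed_radix_less distrib_right
      sum.distrib smul_def sum_distrib_left mult.assoc intro!: sum.cong)

lemma stensor_zero: "stensor V1 W1 V2 W2 0 \<psi> = 0"
  by (simp add: fun_eq_iff stensor_apply)

lemma ampl_stensor_apply:
  assumes "p < k" "\<alpha> < W1" "\<gamma> < W2" "q < k" "\<beta> < W1" "\<delta> < W2"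
  shows "ampl k (V1 * V2) (W1 * W2) (stensor V1 W1 V2 W2 \<phi> \<psi>) M
      ((p * W1 + \<alpha>) * W2 + \<gamma>) ((q * W1 + \<beta>) * W2 + \<delta>) =
    (\<Sum>a<V1. \<Sum>b<V1. (\<Sum>c<V2. \<Sum>d<V2.
      M ((p * V1 + a) * V2 + c) ((q * V1 + b) * V2 + d) * \<psi> (unitmat c d) \<gamma> \<delta>) * \<phi> (unitmat a b) \<alpha> \<beta>)"
proof -
  have idx: "(p * W1 + \<alpha>) * W2 + \<gamma> = p * (W1 * W2) + (\<alpha> * W2 + \<gamma>)"
    "(q * W1 + \<beta>) * W2 + \<delta> = q * (W1 * W2) + (\<beta> * W2 + \<delta>)"
    by (simp_all add: mixed_radix_assoc)
  have "ampl k (V1 * V2) (W1 * W2) (stensor V1 W1 V2 W2 \<phi> \<psi>) M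
      ((p * W1 + \<alpha>) * W2 + \<gamma>) ((q * W1 + \<beta>) * W2 + \<delta>) = stensor V1 W1 V2 W2 \<phi> \<psi>
        (\<lambda>c d. if c < V1 * V2 \<and> d < V1 * V2 then M (p * (V1 * V2) + c) (q * (V1 * V2) + d) else 0)
        (\<alpha> * W2 + \<gamma>) (\<beta> * W2 + \<delta>)"
    unfolding idx using assms by (intro ampl_apply) (simp_all add: mixed_radix_less)
  also have "\<dots> = (\<Sum>a<V1. \<Sum>b<V1. \<Sum>c<V2. \<Sum>d<V2. M ((p * V1 + a) * V2 + c) ((q * V1 + b) * V2 + d) *
      (\<phi> (unitmat a b) \<alpha> \<beta> * \<psi> (unitmat c d) \<gamma> \<delta>))"
    using assms by (simp add: stensor_apply mixed_radix_less mixed_radix_assoc)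
  finally show ?thesis
    by (simp add: sum_distrib_left sum_distrib_right mult_ac)
qed

(* id_k (x) (phi (x) psi) = P o (id_(k W2) (x) phi) o P' o (id_(k V1) (x) psi), where P and P'
   permute tensor factors; this is what makes phi (x) psi completely positive. *)
lemma ampl_stensor:
  assumes "superop V1 W1 \<phi>" "superop V2 W2 \<psi>"
  shows "ampl k (V1 * V2) (W1 * W2) (stensor V1 W1 V2 W2 \<phi> \<psi>) M =
    reindex_mat (k * W1 * W2) (swap_digits W1 W2)
      (ampl (k * W2) V1 W1 \<phi>
        (reindex_mat (k * W2 * V1) (swap_digits W2 V1) (ampl (k * V1) V2 W2 \<psi> M)))"
    (is "?A = reindex_mat _ _ ?B")
proof (intro ext)
  fix i j
  show "?A i j = reindex_mat (k * W1 * W2) (swap_digits W1 W2) ?B i j"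
  proof (cases "i < k * W1 * W2 \<and> j < k * W1 * W2")
    case True
    then obtain p \<alpha> \<gamma> q \<beta> \<delta> where ij: "i = (p * W1 + \<alpha>) * W2 + \<gamma>" "j = (q * W1 + \<beta>) * W2 + \<delta>"
      and bounds: "p < k" "\<alpha> < W1" "\<gamma> < W2" "q < k" "\<beta> < W1" "\<delta> < W2"
      by (metis mixed_radix_cases)
    have "?A i j = ?B ((p * W2 + \<gamma>) * W1 + \<alpha>) ((q * W2 + \<delta>) * W1 + \<beta>)"
      using bounds
      by (simp add: ij ampl_stensor_apply ampl_apply_expand[OF assms(1)]
          ampl_apply_expand[OF assms(2)] reindex_mat_def swap_digits_eq mixed_radix_less)
    also have "\<dots> = reindex_mat (k * W1 * W2) (swap_digits W1 W2) ?B i j"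
      using True bounds by (simp add: reindex_mat_def ij swap_digits_eq)
    finally show ?thesis .
  qed (auto simp: ampl_def reindex_mat_def mult.assoc)
qed

lemma CP_stensor:
  assumes "CP V1 W1 \<phi>" "CP V2 W2 \<psi>"
  shows "CP (V1 * V2) (W1 * W2) (stensor V1 W1 V2 W2 \<phi> \<psi>)"
  unfolding CP_def
proof (intro conjI allI impI superop_stensor)
  fix k M
  assume "psd (k * (V1 * V2)) M"
  then have "psd (k * V1 * W2) (ampl (k * V1) V2 W2 \<psi> M)" (is "psd _ ?T1")
    by (intro CP_ampl[OF assms(2)]) (simp add: mult.assoc)
  then have "psd (k * W2 * V1) (reindex_mat (k * W2 * V1) (swap_digits W2 V1) ?T1)" (is "psd _ ?T2")
    by (rule psd_reindex_mat) (rule bij_betw_swap_digits)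
  then have "psd (k * W2 * W1) (ampl (k * W2) V1 W1 \<phi> ?T2)" (is "psd _ ?T3")
    by (rule CP_ampl[OF assms(1)])
  then have "psd (k * W1 * W2) (reindex_mat (k * W1 * W2) (swap_digits W1 W2) ?T3)"
    by (rule psd_reindex_mat) (rule bij_betw_swap_digits)
  then show "psd (k * (W1 * W2)) (ampl k (V1 * V2) (W1 * W2) (stensor V1 W1 V2 W2 \<phi> \<psi>) M)"
    using assms by (simp add: ampl_stensor CP_def mult.assoc)
qed

lemma tr_sum: "tr n (sum f A) = (\<Sum>a\<in>A. tr n (f a))"
  unfolding tr_def sum_fun_apply by (rule sum.swap)

lemma tr_smul: "tr n (smul c M) = c * tr n M"
  by (simp add: tr_def smul_def sum_distrib_left)

lemma tr_kron: "tr (n * m) (kron n m A B) = tr n A * tr m B"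
  by (simp add: tr_def kron_def sum_lessThan_mult sum_product mixed_radix_less)

lemma channel_tr_unitmat:
  assumes "channel V W \<phi>" "a < V" "b < V"
  shows "tr W (\<phi> (unitmat a b)) = of_bool (a = b)"
proof -
  have "unitmat a b \<in> mats V"
    using assms(2,3) by (auto simp: mats_def unitmat_def)
  then have "tr W (\<phi> (unitmat a b)) = tr V (unitmat a b)"
    using assms(1) by (simp add: channel_def)
  also have "\<dots> = of_bool (a = b)"
    using assms(2) by (cases "a = b") (auto simp: tr_def unitmat_def intro!: sum.neutral)
  finally show ?thesis .
qed

lemma tr_stensor:
  assumes "channel V1 W1 \<phi>" "channel V2 W2 \<psi>"
  shows "tr (W1 * W2) (stensor V1 W1 V2 W2 \<phi> \<psi> M) = tr (V1 * V2) M"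
proof -
  have "tr (W1 * W2) (stensor V1 W1 V2 W2 \<phi> \<psi> M) = (\<Sum>a<V1. \<Sum>b<V1.
      (\<Sum>c<V2. \<Sum>d<V2. M (a * V2 + c) (b * V2 + d) * of_bool (c = d)) * of_bool (a = b))"
    unfolding stensor_def tr_sum tr_smul tr_kron
    by (intro sum.cong refl)
      (simp add: channel_tr_unitmat[OF assms(1)] channel_tr_unitmat[OF assms(2)]
        sum_distrib_right mult_ac)
  also have "\<dots> = (\<Sum>a<V1. \<Sum>c<V2. M (a * V2 + c) (a * V2 + c))"
    by (simp add: sum_lessThan_mult_of_bool)
  also have "\<dots> = tr (V1 * V2) M"
    by (simp add: tr_def sum_lessThan_mult)
  finally show ?thesis .
qed

lemma channel_stensor:
  assumes "channel V1 W1 \<phi>" "channel V2 W2 \<psi>"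
  shows "channel (V1 * V2) (W1 * W2) (stensor V1 W1 V2 W2 \<phi> \<psi>)"
  using assms CP_stensor tr_stensor[OF assms] by (simp add: channel_def)

lemma channel_trunc: "channel V V (trunc V)"
proof -
  have "ampl k V V (trunc V) M = M" if "M \<in> mats (k * V)" for k M
    using that by (cases "V = 0") (auto simp: fun_eq_iff ampl_def trunc_def mats_def)
  moreover have "superop V V (trunc V)"
    by (auto simp: superop_def trunc_def mats_def smul_def fun_eq_iff)
  ultimately have "CP V V (trunc V)"
    by (simp add: CP_def psd_def)
  then show ?thesis
    by (simp add: channel_def tr_def trunc_def)
qed

section \<open>Squares with trivial horizontal boundaries\<close>

lemma sinstI:
  assumes "\<And>n. \<Phi> n \<in> extensional (simp X n)"
    and "\<And>n x. x \<in> simp X n \<Longrightarrow> \<Phi> n x \<in> CPfam V W (simp Y n)"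
    and "\<And>n i x. 1 \<le> n \<Longrightarrow> i \<le> n \<Longrightarrow> x \<in> simp X n \<Longrightarrow>
      \<Phi> (n - 1) (face X n i x) = push (face Y n i) (\<Phi> n x)"
    and "\<And>n i x. i \<le> n \<Longrightarrow> x \<in> simp X n \<Longrightarrow>
      \<Phi> (Suc n) (degen X n i x) = push (degen Y n i) (\<Phi> n x)"
  shows "\<Phi> \<in> sinst V W X Y"
  using assms by (simp add: sinst_def)

lemma
  assumes "\<Phi> \<in> sinst V W X Y"
  shows sinst_extensional: "\<Phi> n \<in> extensional (simp X n)"
    and sinst_CPfam: "x \<in> simp X n \<Longrightarrow> \<Phi> n x \<in> CPfam V W (simp Y n)"
    and sinst_face: "1 \<le> n \<Longrightarrow> i \<le> n \<Longrightarrow> x \<in> simp X n \<Longrightarrow>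
      \<Phi> (n - 1) (face X n i x) = push (face Y n i) (\<Phi> n x)"
    and sinst_degen: "i \<le> n \<Longrightarrow> x \<in> simp X n \<Longrightarrow>
      \<Phi> (Suc n) (degen X n i x) = push (degen Y n i) (\<Phi> n x)"
  using assms by (simp_all add: sinst_def)

lemma sum_unit_support: "(\<Sum>s | F s \<noteq> 0. F s) = (F () :: 'b::comm_monoid_add)"
proof -
  have "{s. F s \<noteq> 0} = (if F () = 0 then {} else {()})"
    by auto
  then show ?thesis
    by simp
qed

lemma push_unit: "push (\<lambda>_. ()) F = F"
proof
  fix t :: unit
  show "push (\<lambda>_. ()) F t = F t"
    using sum_unit_support[of F] by (simp add: push_def)
qed

lemma CPfam_unit_iff: "F \<in> CPfam V W UNIV \<longleftrightarrow> channel V W (F ())"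
  unfolding CPfam_def mem_Collect_eq sum_unit_support by (auto simp: channel_def)

lemma sinst_Delta0_iff:
  "\<Phi> \<in> sinst V W Delta0 Delta0 \<longleftrightarrow> channel V W (chan_of \<Phi>) \<and> \<Phi> = (\<lambda>n x y. chan_of \<Phi>)"
proof
  assume \<Phi>: "\<Phi> \<in> sinst V W Delta0 Delta0"
  have "\<Phi> (Suc n) () = \<Phi> n ()" for n
    using sinst_degen[OF \<Phi>, of 0 n "()"] by (simp add: Delta0_def push_unit)
  then have "\<Phi> n () = \<Phi> 0 ()" for n
    by (induct n) simp_all
  moreover have "channel V W (\<Phi> 0 () ())"
    using sinst_CPfam[OF \<Phi>, of "()" 0] by (simp add: Delta0_def CPfam_unit_iff)
  ultimately show "channel V W (chan_of \<Phi>) \<and> \<Phi> = (\<lambda>n x y. chan_of \<Phi>)"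
    by (simp add: fun_eq_iff chan_of_def)
next
  assume \<Phi>: "channel V W (chan_of \<Phi>) \<and> \<Phi> = (\<lambda>n x y. chan_of \<Phi>)"
  show "\<Phi> \<in> sinst V W Delta0 Delta0"
  proof (rule sinstI)
    show "\<Phi> n x \<in> CPfam V W (simp Delta0 n)" for n x
      using \<Phi> by (metis CPfam_unit_iff Delta0_def sset.select_convs(1))
  qed (subst \<Phi>[THEN conjunct2], simp add: Delta0_def push_unit)+
qed

lemma bij_betw_chan_of: "bij_betw chan_of (sinst V W Delta0 Delta0) {\<phi>. channel V W \<phi>}"
proof (rule bij_betw_byWitness[where f' = "\<lambda>\<phi> n x y. \<phi>"])
  show "\<forall>\<Phi>\<in>sinst V W Delta0 Delta0. (\<lambda>n x y. chan_of \<Phi>) = \<Phi>"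
    using sinst_Delta0_iff by metis
  show "chan_of ` sinst V W Delta0 Delta0 \<subseteq> {\<phi>. channel V W \<phi>}"
    using sinst_Delta0_iff by blast
  show "(\<lambda>\<phi> n x y. \<phi>) ` {\<phi>. channel V W \<phi>} \<subseteq> sinst V W Delta0 Delta0"
    by (auto simp: sinst_Delta0_iff chan_of_def)
qed (simp add: chan_of_def)

lemma hcomp_Delta0: "hcomp Delta0 Delta0 \<Phi> \<Psi> 0 ((), ()) ((), ()) = chan_of \<Psi> \<circ> chan_of \<Phi>"
  by (simp add: hcomp_def Delta0_def chan_of_def)

lemma hid_Delta0: "hid V \<in> sinst V V Delta0 Delta0" "chan_of (hid V) = trunc V"
  by (simp_all add: sinst_Delta0_iff hid_def chan_of_def channel_trunc)

lemma vcomp_Delta0: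
  assumes "\<Phi> \<in> sinst V1 W1 Delta0 Delta0" "\<Psi> \<in> sinst V2 W2 Delta0 Delta0"
  shows "vcomp V1 W1 V2 W2 Delta0 \<Phi> \<Psi> = (\<lambda>n x z. stensor V1 W1 V2 W2 (chan_of \<Phi>) (chan_of \<Psi>))"
proof -
  define \<phi> \<psi> where "\<phi> = chan_of \<Phi>" and "\<psi> = chan_of \<Psi>"
  have \<Phi>: "\<Phi> = (\<lambda>n x y. \<phi>)" and \<Psi>: "\<Psi> = (\<lambda>n x y. \<psi>)"
    using assms by (simp_all only: sinst_Delta0_iff \<phi>_def \<psi>_def)
  have "(\<Sum>y::unit | \<phi> \<noteq> 0. stensor V1 W1 V2 W2 \<phi> \<psi>) = stensor V1 W1 V2 W2 \<phi> \<psi>"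
    by (cases "\<phi> = 0") (simp_all add: stensor_zero)
  then show ?thesis
    unfolding \<Phi> \<Psi> by (simp add: vcomp_def[abs_def] Delta0_def chan_of_def restrict_UNIV)
qed

lemma vcomp_Delta0_sinst:
  assumes "\<Phi> \<in> sinst V1 W1 Delta0 Delta0" "\<Psi> \<in> sinst V2 W2 Delta0 Delta0"
  shows "vcomp V1 W1 V2 W2 Delta0 \<Phi> \<Psi> \<in> sinst (V1 * V2) (W1 * W2) Delta0 Delta0"
    and "chan_of (vcomp V1 W1 V2 W2 Delta0 \<Phi> \<Psi>) = stensor V1 W1 V2 W2 (chan_of \<Phi>) (chan_of \<Psi>)"
  using assms channel_stensor by (simp_all add: vcomp_Delta0 sinst_Delta0_iff chan_of_def)

section \<open>Completely positive maps on C and distributions\<close>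

definition scalar_sop :: "complex \<Rightarrow> sop" where
  "scalar_sop c = (\<lambda>M i j. if i = 0 \<and> j = 0 then c * M 0 0 else 0)"

lemma scalar_sop_inject: "scalar_sop a = scalar_sop b \<longleftrightarrow> a = b"
proof
  assume "scalar_sop a = scalar_sop b"
  then have "scalar_sop a (unitmat 0 0) 0 0 = scalar_sop b (unitmat 0 0) 0 0"
    by simp
  then show "a = b"
    by (simp add: scalar_sop_def unitmat_def)
qed simp

lemma scalar_sop_0: "scalar_sop 0 = 0"
  by (simp add: scalar_sop_def fun_eq_iff)

lemma scalar_sop_eq_0_iff: "scalar_sop c = 0 \<longleftrightarrow> c = 0"
  using scalar_sop_inject scalar_sop_0 by metis

lemma sum_scalar_sop: "(\<Sum>s\<in>A. scalar_sop (f s)) = scalar_sop (\<Sum>s\<in>A. f s)"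
  by (induct A rule: infinite_finite_induct) (auto simp: scalar_sop_def fun_eq_iff distrib_right)

lemma scalar_sop_comp: "scalar_sop a \<circ> scalar_sop b = scalar_sop (b * a)"
  by (simp add: scalar_sop_def fun_eq_iff)

lemma trunc_1_eq_scalar_sop: "trunc 1 = scalar_sop 1"
  by (auto simp: scalar_sop_def trunc_def fun_eq_iff)

lemma scalar_of_scalar_sop: "scalar_of (scalar_sop c) = Re c"
  by (simp add: scalar_of_def scalar_sop_def unitmat_def)

lemma stensor_scalar_sop: "stensor 1 1 1 1 (scalar_sop a) (scalar_sop b) = scalar_sop (a * b)"
  by (simp add: fun_eq_iff stensor_apply scalar_sop_def unitmat_def)

lemma superop_scalar_sop: "superop 1 1 (scalar_sop c)"
  by (auto simp: superop_def scalar_sop_def mats_def trunc_def smul_def fun_eq_iff algebra_simps)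

lemma superop_1_1_eq_scalar_sop:
  assumes "superop 1 1 \<phi>"
  shows "\<phi> = scalar_sop (\<phi> (unitmat 0 0) 0 0)"
proof (intro ext)
  fix M i j
  have "\<phi> (unitmat 0 0) \<in> mats 1"
    using assms by (simp add: superop_def)
  then show "\<phi> M i j = scalar_sop (\<phi> (unitmat 0 0) 0 0) M i j"
    using superop_apply_expand[OF assms, of M i j]
    by (auto simp: scalar_sop_def mats_def mult.commute)
qed

lemma nonneg_cnj_mult: "0 \<le> cnj z * z"
  by (simp add: mult.commute[of "cnj z"] complex_mult_cnj less_eq_complex_def)

lemma CP_1_1_scalar_sop_iff: "CP 1 1 (scalar_sop c) \<longleftrightarrow> 0 \<le> c"
proof
  assume "CP 1 1 (scalar_sop c)"
  moreover have "psd 1 (unitmat 0 0)"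
    by (simp add: psd_iff_quad_form quad_form_def mats_def unitmat_def nonneg_cnj_mult)
  ultimately have "psd 1 (ampl 1 1 1 (scalar_sop c) (unitmat 0 0))"
    using CP_ampl[of 1 1 "scalar_sop c" 1] by simp
  then have "0 \<le> quad_form 1 (ampl 1 1 1 (scalar_sop c) (unitmat 0 0)) (\<lambda>_. 1)"
    by (simp add: psd_iff_quad_form)
  then show "0 \<le> c"
    by (simp add: quad_form_def ampl_def scalar_sop_def unitmat_def)
next
  assume c: "0 \<le> c"
  have "psd (k * 1) (ampl k 1 1 (scalar_sop c) M)" if "psd (k * 1) M" for k M
  proof -
    have "ampl k 1 1 (scalar_sop c) M = (\<lambda>i j. c * M i j)"
      using that by (auto simp: fun_eq_iff ampl_def scalar_sop_def psd_def mats_def)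
    moreover have "quad_form k (\<lambda>i j. c * M i j) v = c * quad_form k M v" for v
      by (simp add: quad_form_def sum_distrib_left mult_ac)
    ultimately show ?thesis
      using that c by (auto simp: psd_iff_quad_form mats_def)
  qed
  then show "CP 1 1 (scalar_sop c)"
    unfolding CP_def using superop_scalar_sop by blast
qed

lemma channel_1_1_scalar_sop_iff: "channel 1 1 (scalar_sop c) \<longleftrightarrow> c = 1"
proof -
  have "unitmat 0 0 \<in> mats 1"
    by (simp add: mats_def unitmat_def)
  then have "(\<forall>M \<in> mats 1. tr 1 (scalar_sop c M) = tr 1 M) \<longleftrightarrow> c = 1"
    by (force simp: tr_def scalar_sop_def unitmat_def)
  then show ?thesis
    using CP_1_1_scalar_sop_iff[of 1] by (auto simp: channel_def less_eq_complex_def)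
qed

lemma CP_1_1_iff: "CP 1 1 \<phi> \<longleftrightarrow> (\<exists>r\<ge>0. \<phi> = scalar_sop (of_real r))"
proof
  assume \<phi>: "CP 1 1 \<phi>"
  define c where "c = \<phi> (unitmat 0 0) 0 0"
  have "superop 1 1 \<phi>"
    using \<phi> by (simp add: CP_def)
  then have \<phi>_eq: "\<phi> = scalar_sop c"
    unfolding c_def by (rule superop_1_1_eq_scalar_sop)
  then have "0 \<le> c"
    using \<phi> CP_1_1_scalar_sop_iff by metis
  then have "0 \<le> Re c" and c: "of_real (Re c) = c"
    by (simp_all add: less_eq_complex_def complex_eq_iff)
  then show "\<exists>r\<ge>0. \<phi> = scalar_sop (of_real r)"
    unfolding \<phi>_eq by (intro exI[of _ "Re c"] conjI) (simp_all only: c)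
next
  assume "\<exists>r\<ge>0. \<phi> = scalar_sop (of_real r)"
  then obtain r where "0 \<le> r" "\<phi> = scalar_sop (of_real r)"
    by blast
  then show "CP 1 1 \<phi>"
    by (simp only: CP_1_1_scalar_sop_iff) (simp add: less_eq_complex_def)
qed

definition sop_of_pmf :: "'b pmf \<Rightarrow> 'b \<Rightarrow> sop" where
  "sop_of_pmf p s = scalar_sop (of_real (pmf p s))"

lemma sop_of_pmf_inject: "sop_of_pmf p = sop_of_pmf q \<Longrightarrow> p = q"
  by (rule pmf_eqI) (metis sop_of_pmf_def scalar_sop_inject of_real_eq_iff)

lemma support_sop_of_pmf: "{s. sop_of_pmf p s \<noteq> 0} = set_pmf p"
  by (auto simp: sop_of_pmf_def scalar_sop_eq_0_iff set_pmf_iff)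

lemma embed_pmf_scalar_of_sop_of_pmf: "embed_pmf (\<lambda>s. scalar_of (sop_of_pmf p s)) = p"
  using type_definition.Rep_inverse[OF td_pmf_embed_pmf]
  by (simp add: sop_of_pmf_def scalar_of_scalar_sop)

lemma push_sop_of_pmf:
  assumes "finite (set_pmf p)"
  shows "push g (sop_of_pmf p) = sop_of_pmf (map_pmf g p)"
proof
  fix t
  have "pmf (map_pmf g p) t = measure p (g -` {t} \<inter> set_pmf p)"
    by (simp add: pmf_map measure_Int_set_pmf)
  also have "\<dots> = (\<Sum>s\<in>set_pmf p \<inter> g -` {t}. pmf p s)"
    using assms by (simp add: measure_measure_pmf_finite Int_commute)
  finally have "pmf (map_pmf g p) t = (\<Sum>s\<in>set_pmf p \<inter> g -` {t}. pmf p s)" .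
  moreover have "{s. sop_of_pmf p s \<noteq> 0 \<and> g s = t} = set_pmf p \<inter> g -` {t}"
    by (auto simp: sop_of_pmf_def scalar_sop_eq_0_iff set_pmf_iff)
  ultimately show "push g (sop_of_pmf p) t = sop_of_pmf (map_pmf g p) t"
    by (simp add: push_def sop_of_pmf_def sum_scalar_sop)
qed

lemma pmf_embed_pmf_finite_support:
  assumes "finite {s. w s \<noteq> 0}" "\<And>s. 0 \<le> w s" "(\<Sum>s | w s \<noteq> 0. w s) = 1"
  shows "pmf (embed_pmf w) = w"
proof -
  have "(\<integral>\<^sup>+s. ennreal (w s) \<partial>count_space UNIV) = 1"
    using assms by (subst nn_integral_count_space'[of "{s. w s \<noteq> 0}"]) auto
  then show ?thesis
    using pmf_embed_pmf[of w] assms(2) by auto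
qed

lemma sop_of_pmf_CPfam:
  assumes "p \<in> Dset S"
  shows "sop_of_pmf p \<in> CPfam 1 1 S"
proof -
  have fin: "finite (set_pmf p)" and sub: "set_pmf p \<subseteq> S"
    using assms by (simp_all add: Dset_def)
  have "(\<Sum>s\<in>set_pmf p. sop_of_pmf p s) = scalar_sop (of_real (\<Sum>s\<in>set_pmf p. pmf p s))"
    by (simp add: sop_of_pmf_def sum_scalar_sop)
  also have "(\<Sum>s\<in>set_pmf p. pmf p s) = 1"
    using fin by (rule sum_pmf_eq_1) simp
  finally have "channel 1 1 (\<Sum>s\<in>set_pmf p. sop_of_pmf p s)"
    by (simp only: of_real_1 channel_1_1_scalar_sop_iff)
  moreover have "CP 1 1 (sop_of_pmf p s)" for s
    unfolding CP_1_1_iff sop_of_pmf_def by (intro exI[of _ "pmf p s"] conjI pmf_nonneg refl)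
  ultimately show ?thesis
    unfolding CPfam_def mem_Collect_eq support_sop_of_pmf using fin sub by blast
qed

lemma CPfam_1_1_iff: "\<Phi> \<in> CPfam 1 1 S \<longleftrightarrow> (\<exists>p \<in> Dset S. \<Phi> = sop_of_pmf p)"
proof
  assume \<Phi>: "\<Phi> \<in> CPfam 1 1 S"
  then have "\<forall>s. \<exists>r\<ge>0. \<Phi> s = scalar_sop (of_real r)"
    unfolding CPfam_def CP_1_1_iff by blast
  then obtain w where w_spec: "\<And>s. 0 \<le> w s \<and> \<Phi> s = scalar_sop (of_real (w s))"
    by metis
  then have w: "\<And>s. 0 \<le> w s" and \<Phi>_eq: "\<Phi> = (\<lambda>s. scalar_sop (of_real (w s)))"
    by auto
  have supp: "{s. \<Phi> s \<noteq> 0} = {s. w s \<noteq> 0}"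
    by (simp add: \<Phi>_eq scalar_sop_eq_0_iff)
  have "channel 1 1 (\<Sum>s | \<Phi> s \<noteq> 0. \<Phi> s)"
    using \<Phi> by (simp add: CPfam_def)
  then have "channel 1 1 (scalar_sop (of_real (\<Sum>s | w s \<noteq> 0. w s)))"
    by (simp only: supp) (simp add: \<Phi>_eq sum_scalar_sop)
  then have "(\<Sum>s | w s \<noteq> 0. w s) = 1"
    by (simp only: channel_1_1_scalar_sop_iff of_real_eq_1_iff)
  moreover have "finite {s. w s \<noteq> 0}" "{s. w s \<noteq> 0} \<subseteq> S"
    using \<Phi> supp by (auto simp: CPfam_def)
  ultimately have "pmf (embed_pmf w) = w"
    using pmf_embed_pmf_finite_support w by blast
  moreover from this have "set_pmf (embed_pmf w) = {s. w s \<noteq> 0}"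
    by (auto simp: set_pmf_iff)
  ultimately show "\<exists>p \<in> Dset S. \<Phi> = sop_of_pmf p"
    using \<open>finite {s. w s \<noteq> 0}\<close> \<open>{s. w s \<noteq> 0} \<subseteq> S\<close>
    by (intro bexI[of _ "embed_pmf w"]) (auto simp: Dset_def \<Phi>_eq sop_of_pmf_def)
qed (use sop_of_pmf_CPfam in blast)

section \<open>The Kleisli category of the distribution monad\<close>

(* The part of is_sset needed to pass between instruments and Kleisli maps; unlike the
   simplicial identities it is evidently inherited by sprod. *)
definition sset_closed :: "'a sset \<Rightarrow> bool" where
  "sset_closed X \<longleftrightarrow>
    (\<forall>n i x. 1 \<le> n \<and> i \<le> n \<and> x \<in> simp X n \<longrightarrow> face X n i x \<in> simp X (n - 1)) \<and>
    (\<forall>n i x. i \<le> n \<and> x \<in> simp X n \<longrightarrow> degen X n i x \<in> simp X (Suc n))"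

lemma is_sset_imp_sset_closed: "is_sset X \<Longrightarrow> sset_closed X"
  by (simp add: is_sset_def sset_closed_def)

lemma
  assumes "sset_closed X"
  shows sset_closed_face: "1 \<le> n \<Longrightarrow> i \<le> n \<Longrightarrow> x \<in> simp X n \<Longrightarrow> face X n i x \<in> simp X (n - 1)"
    and sset_closed_degen: "i \<le> n \<Longrightarrow> x \<in> simp X n \<Longrightarrow> degen X n i x \<in> simp X (Suc n)"
  using assms by (simp_all add: sset_closed_def)

lemma sset_closed_sprod: "sset_closed X1 \<Longrightarrow> sset_closed X2 \<Longrightarrow> sset_closed (sprod X1 X2)"
  by (auto simp: sset_closed_def sprod_def)

lemma sprod_simps:
  "simp (sprod X1 X2) n = simp X1 n \<times> simp X2 n"
  "face (sprod X1 X2) n i = (\<lambda>(x1, x2). (face X1 n i x1, face X2 n i x2))"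
  "degen (sprod X1 X2) n i = (\<lambda>(x1, x2). (degen X1 n i x1, degen X2 n i x2))"
  by (simp_all add: sprod_def)

lemma kmapsI:
  assumes "\<And>n. f n \<in> extensional (simp X n)"
    and "\<And>n x. x \<in> simp X n \<Longrightarrow> f n x \<in> Dset (simp Y n)"
    and "\<And>n i x. 1 \<le> n \<Longrightarrow> i \<le> n \<Longrightarrow> x \<in> simp X n \<Longrightarrow>
      f (n - 1) (face X n i x) = map_pmf (face Y n i) (f n x)"
    and "\<And>n i x. i \<le> n \<Longrightarrow> x \<in> simp X n \<Longrightarrow>
      f (Suc n) (degen X n i x) = map_pmf (degen Y n i) (f n x)"
  shows "f \<in> kmaps X Y"
  using assms by (simp add: kmaps_def)

lemma
  assumes "f \<in> kmaps X Y"
  shows kmaps_extensional: "f n \<in> extensional (simp X n)"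
    and kmaps_Dset: "x \<in> simp X n \<Longrightarrow> f n x \<in> Dset (simp Y n)"
    and kmaps_face: "1 \<le> n \<Longrightarrow> i \<le> n \<Longrightarrow> x \<in> simp X n \<Longrightarrow>
      f (n - 1) (face X n i x) = map_pmf (face Y n i) (f n x)"
    and kmaps_degen: "i \<le> n \<Longrightarrow> x \<in> simp X n \<Longrightarrow>
      f (Suc n) (degen X n i x) = map_pmf (degen Y n i) (f n x)"
  using assms by (simp_all add: kmaps_def)

lemma bind_pmf_natural:
  assumes "\<And>y. y \<in> set_pmf p \<Longrightarrow> g' (\<sigma> y) = map_pmf \<tau> (g y)"
  shows "bind_pmf (map_pmf \<sigma> p) g' = map_pmf \<tau> (bind_pmf p g)"
  using assms by (simp add: bind_map_pmf map_bind_pmf cong: bind_pmf_cong)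

lemma kcomp_natural:
  assumes "f \<in> kmaps X Y" "x \<in> simp X n" "x' \<in> simp X n'" "f n' x' = map_pmf \<sigma> (f n x)"
    and "\<And>y. y \<in> simp Y n \<Longrightarrow> g n' (\<sigma> y) = map_pmf \<tau> (g n y)"
  shows "kcomp X f g n' x' = map_pmf \<tau> (kcomp X f g n x)"
  using assms kmaps_Dset[OF assms(1,2)]
  by (auto simp: kcomp_def Dset_def intro!: bind_pmf_natural)

lemma kcomp_kmaps:
  assumes "sset_closed X" "f \<in> kmaps X Y" "g \<in> kmaps Y Z"
  shows "kcomp X f g \<in> kmaps X Z"
proof (rule kmapsI)
  show "kcomp X f g n \<in> extensional (simp X n)" for n
    by (simp add: kcomp_def)
  show "kcomp X f g n x \<in> Dset (simp Z n)" if "x \<in> simp X n" for n x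
    using that kmaps_Dset[OF assms(2) that] kmaps_Dset[OF assms(3)]
    by (fastforce simp: kcomp_def Dset_def set_bind_pmf)
  show "kcomp X f g (n - 1) (face X n i x) = map_pmf (face Z n i) (kcomp X f g n x)"
    if "1 \<le> n" "i \<le> n" "x \<in> simp X n" for n i x
    using that
    by (intro kcomp_natural[OF assms(2), where \<sigma> = "face Y n i"] sset_closed_face[OF assms(1)]
        kmaps_face[OF assms(2)] kmaps_face[OF assms(3)])
  show "kcomp X f g (Suc n) (degen X n i x) = map_pmf (degen Z n i) (kcomp X f g n x)"
    if "i \<le> n" "x \<in> simp X n" for n i x
    using that
    by (intro kcomp_natural[OF assms(2), where \<sigma> = "degen Y n i"] sset_closed_degen[OF assms(1)]
        kmaps_degen[OF assms(2)] kmaps_degen[OF assms(3)])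
qed

lemma kid_kmaps:
  assumes "sset_closed X"
  shows "kid X \<in> kmaps X X"
proof (rule kmapsI)
  show "kid X (n - 1) (face X n i x) = map_pmf (face X n i) (kid X n x)"
    if "1 \<le> n" "i \<le> n" "x \<in> simp X n" for n i x
    using that sset_closed_face[OF assms that] by (simp add: kid_def)
  show "kid X (Suc n) (degen X n i x) = map_pmf (degen X n i) (kid X n x)"
    if "i \<le> n" "x \<in> simp X n" for n i x
    using that sset_closed_degen[OF assms that] by (simp add: kid_def)
qed (simp_all add: kid_def Dset_def)

lemma kprod_natural:
  assumes "x1 \<in> simp X1 n" "x2 \<in> simp X2 n" "x1' \<in> simp X1 n'" "x2' \<in> simp X2 n'"
    and "f n' x1' = map_pmf \<sigma>1 (f n x1)" "g n' x2' = map_pmf \<sigma>2 (g n x2)"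
  shows "kprod X1 X2 f g n' (x1', x2') =
    map_pmf (\<lambda>(y1, y2). (\<sigma>1 y1, \<sigma>2 y2)) (kprod X1 X2 f g n (x1, x2))"
  using assms by (simp add: kprod_def map_pair)

lemma kprod_kmaps:
  assumes "sset_closed X1" "sset_closed X2" "f \<in> kmaps X1 Y1" "g \<in> kmaps X2 Y2"
  shows "kprod X1 X2 f g \<in> kmaps (sprod X1 X2) (sprod Y1 Y2)"
proof (rule kmapsI)
  show "kprod X1 X2 f g n \<in> extensional (simp (sprod X1 X2) n)" for n
    by (simp add: kprod_def sprod_simps)
  show "kprod X1 X2 f g n x \<in> Dset (simp (sprod Y1 Y2) n)" if "x \<in> simp (sprod X1 X2) n" for n x
    using that kmaps_Dset[OF assms(3)] kmaps_Dset[OF assms(4)]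
    by (force simp: kprod_def sprod_simps Dset_def)
  show "kprod X1 X2 f g (n - 1) (face (sprod X1 X2) n i x) =
      map_pmf (face (sprod Y1 Y2) n i) (kprod X1 X2 f g n x)"
    if nx: "1 \<le> n" "i \<le> n" "x \<in> simp (sprod X1 X2) n" for n i x
  proof -
    obtain x1 x2 where x: "x = (x1, x2)" "x1 \<in> simp X1 n" "x2 \<in> simp X2 n"
      using nx(3) by (auto simp: sprod_simps)
    show ?thesis
      unfolding x(1) sprod_simps prod.case using nx(1,2) x(2,3)
      by (intro kprod_natural sset_closed_face[OF assms(1)] sset_closed_face[OF assms(2)]
          kmaps_face[OF assms(3)] kmaps_face[OF assms(4)])
  qed
  show "kprod X1 X2 f g (Suc n) (degen (sprod X1 X2) n i x) =
      map_pmf (degen (sprod Y1 Y2) n i) (kprod X1 X2 f g n x)"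
    if nx: "i \<le> n" "x \<in> simp (sprod X1 X2) n" for n i x
  proof -
    obtain x1 x2 where x: "x = (x1, x2)" "x1 \<in> simp X1 n" "x2 \<in> simp X2 n"
      using nx(2) by (auto simp: sprod_simps)
    show ?thesis
      unfolding x(1) sprod_simps prod.case using nx(1) x(2,3)
      by (intro kprod_natural sset_closed_degen[OF assms(1)] sset_closed_degen[OF assms(2)]
          kmaps_degen[OF assms(3)] kmaps_degen[OF assms(4)])
  qed
qed

section \<open>Squares with trivial vertical boundaries\<close>

definition inst_of_kmap :: "'a sset \<Rightarrow> (nat \<Rightarrow> 'a \<Rightarrow> 'b pmf) \<Rightarrow> nat \<Rightarrow> 'a \<Rightarrow> 'b \<Rightarrow> sop" where
  "inst_of_kmap X f n = (\<lambda>x \<in> simp X n. sop_of_pmf (f n x))"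

lemma inst_of_kmap_apply: "x \<in> simp X n \<Longrightarrow> inst_of_kmap X f n x = sop_of_pmf (f n x)"
  by (simp add: inst_of_kmap_def)

lemma sinst_1_1_apply:
  assumes "\<Phi> \<in> sinst 1 1 X Y" "x \<in> simp X n"
  shows "dist_of X \<Phi> n x \<in> Dset (simp Y n)" "\<Phi> n x = sop_of_pmf (dist_of X \<Phi> n x)"
proof -
  obtain p where p: "p \<in> Dset (simp Y n)" "\<Phi> n x = sop_of_pmf p"
    using sinst_CPfam[OF assms] CPfam_1_1_iff by blast
  moreover have "dist_of X \<Phi> n x = p"
    using assms(2) p(2) by (simp add: dist_of_def embed_pmf_scalar_of_sop_of_pmf)
  ultimately show "dist_of X \<Phi> n x \<in> Dset (simp Y n)" "\<Phi> n x = sop_of_pmf (dist_of X \<Phi> n x)"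
    by simp_all
qed

lemma sinst_1_1_eq_inst_of_kmap:
  assumes "\<Phi> \<in> sinst 1 1 X Y"
  shows "\<Phi> = inst_of_kmap X (dist_of X \<Phi>)"
proof (rule ext, rule ext)
  fix n x
  show "\<Phi> n x = inst_of_kmap X (dist_of X \<Phi>) n x"
    using sinst_1_1_apply(2)[OF assms] sinst_extensional[OF assms, of n]
    by (cases "x \<in> simp X n") (simp_all add: inst_of_kmap_def extensional_def)
qed

lemma dist_of_natural:
  assumes "\<Phi> \<in> sinst 1 1 X Y" "x \<in> simp X n" "x' \<in> simp X n'" "\<Phi> n' x' = push g (\<Phi> n x)"
  shows "dist_of X \<Phi> n' x' = map_pmf g (dist_of X \<Phi> n x)"
proof (rule sop_of_pmf_inject)
  have "finite (set_pmf (dist_of X \<Phi> n x))"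
    using sinst_1_1_apply(1)[OF assms(1,2)] by (simp add: Dset_def)
  then show "sop_of_pmf (dist_of X \<Phi> n' x') = sop_of_pmf (map_pmf g (dist_of X \<Phi> n x))"
    using assms(4) sinst_1_1_apply(2)[OF assms(1,2)] sinst_1_1_apply(2)[OF assms(1,3)]
    by (simp add: push_sop_of_pmf)
qed

lemma dist_of_kmaps:
  assumes "sset_closed X" "\<Phi> \<in> sinst 1 1 X Y"
  shows "dist_of X \<Phi> \<in> kmaps X Y"
proof (rule kmapsI)
  show "dist_of X \<Phi> n \<in> extensional (simp X n)" for n
    by (simp add: dist_of_def)
  show "dist_of X \<Phi> n x \<in> Dset (simp Y n)" if "x \<in> simp X n" for n x
    using sinst_1_1_apply(1)[OF assms(2) that] .
  show "dist_of X \<Phi> (n - 1) (face X n i x) = map_pmf (face Y n i) (dist_of X \<Phi> n x)"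
    if "1 \<le> n" "i \<le> n" "x \<in> simp X n" for n i x
    using that
    by (intro dist_of_natural[OF assms(2)] sset_closed_face[OF assms(1)] sinst_face[OF assms(2)])
  show "dist_of X \<Phi> (Suc n) (degen X n i x) = map_pmf (degen Y n i) (dist_of X \<Phi> n x)"
    if "i \<le> n" "x \<in> simp X n" for n i x
    using that
    by (intro dist_of_natural[OF assms(2)] sset_closed_degen[OF assms(1)] sinst_degen[OF assms(2)])
qed

lemma inst_of_kmap_natural:
  assumes "f \<in> kmaps X Y" "x \<in> simp X n" "x' \<in> simp X n'" "f n' x' = map_pmf g (f n x)"
  shows "inst_of_kmap X f n' x' = push g (inst_of_kmap X f n x)"
  using assms kmaps_Dset[OF assms(1,2)] by (simp add: inst_of_kmap_def Dset_def push_sop_of_pmf)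

lemma inst_of_kmap_sinst:
  assumes "sset_closed X" "f \<in> kmaps X Y"
  shows "inst_of_kmap X f \<in> sinst 1 1 X Y"
proof (rule sinstI)
  show "inst_of_kmap X f n \<in> extensional (simp X n)" for n
    by (simp add: inst_of_kmap_def)
  show "inst_of_kmap X f n x \<in> CPfam 1 1 (simp Y n)" if "x \<in> simp X n" for n x
    using that kmaps_Dset[OF assms(2) that] sop_of_pmf_CPfam by (simp add: inst_of_kmap_def)
  show "inst_of_kmap X f (n - 1) (face X n i x) = push (face Y n i) (inst_of_kmap X f n x)"
    if "1 \<le> n" "i \<le> n" "x \<in> simp X n" for n i x
    using that
    by (intro inst_of_kmap_natural[OF assms(2)] sset_closed_face[OF assms(1)] kmaps_face[OF assms(2)])
  show "inst_of_kmap X f (Suc n) (degen X n i x) = push (degen Y n i) (inst_of_kmap X f n x)"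
    if "i \<le> n" "x \<in> simp X n" for n i x
    using that
    by (intro inst_of_kmap_natural[OF assms(2)] sset_closed_degen[OF assms(1)]
        kmaps_degen[OF assms(2)])
qed

lemma dist_of_inst_of_kmap:
  assumes "f \<in> kmaps X Y"
  shows "dist_of X (inst_of_kmap X f) = f"
proof (intro ext)
  fix n x
  show "dist_of X (inst_of_kmap X f) n x = f n x"
    using kmaps_extensional[OF assms, of n]
    by (cases "x \<in> simp X n")
      (simp_all add: dist_of_def inst_of_kmap_def embed_pmf_scalar_of_sop_of_pmf extensional_def)
qed

lemma bij_betw_dist_of:
  assumes "sset_closed X"
  shows "bij_betw (dist_of X) (sinst 1 1 X Y) (kmaps X Y)"
proof (rule bij_betw_byWitness[where f' = "inst_of_kmap X"])
  show "\<forall>\<Phi>\<in>sinst 1 1 X Y. inst_of_kmap X (dist_of X \<Phi>) = \<Phi>"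
    using sinst_1_1_eq_inst_of_kmap by metis
  show "\<forall>f\<in>kmaps X Y. dist_of X (inst_of_kmap X f) = f"
    using dist_of_inst_of_kmap by blast
  show "dist_of X ` sinst 1 1 X Y \<subseteq> kmaps X Y"
    using dist_of_kmaps[OF assms] by blast
  show "inst_of_kmap X ` kmaps X Y \<subseteq> sinst 1 1 X Y"
    using inst_of_kmap_sinst[OF assms] by blast
qed

lemma pmf_bind_finite:
  "finite (set_pmf p) \<Longrightarrow> pmf (bind_pmf p g) z = (\<Sum>y\<in>set_pmf p. pmf p y * pmf (g y) z)"
  unfolding pmf_bind by (subst integral_measure_pmf[of "set_pmf p"]) auto

lemma vcomp_inst_of_kmap:
  assumes "f \<in> kmaps X Y"
  shows "vcomp 1 1 1 1 X (inst_of_kmap X f) (inst_of_kmap Y g) = inst_of_kmap X (kcomp X f g)"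
proof (rule ext, rule ext)
  fix n x
  show "vcomp 1 1 1 1 X (inst_of_kmap X f) (inst_of_kmap Y g) n x =
      inst_of_kmap X (kcomp X f g) n x"
  proof (cases "x \<in> simp X n")
    case True
    then have fin: "finite (set_pmf (f n x))" and sub: "set_pmf (f n x) \<subseteq> simp Y n"
      using kmaps_Dset[OF assms True] by (simp_all add: Dset_def)
    have "vcomp 1 1 1 1 X (inst_of_kmap X f) (inst_of_kmap Y g) n x =
        (\<lambda>z. \<Sum>y\<in>set_pmf (f n x). stensor 1 1 1 1 (sop_of_pmf (f n x) y) (inst_of_kmap Y g n y z))"
      using True by (simp add: vcomp_def inst_of_kmap_apply support_sop_of_pmf)
    also have "\<dots> = (\<lambda>z. \<Sum>y\<in>set_pmf (f n x). scalar_sop (of_real (pmf (f n x) y * pmf (g n y) z)))"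
    proof (rule ext, rule sum.cong[OF refl])
      fix z y
      assume "y \<in> set_pmf (f n x)"
      then have "y \<in> simp Y n"
        using sub by blast
      then show "stensor 1 1 1 1 (sop_of_pmf (f n x) y) (inst_of_kmap Y g n y z) =
          scalar_sop (of_real (pmf (f n x) y * pmf (g n y) z))"
        unfolding inst_of_kmap_apply[OF \<open>y \<in> simp Y n\<close>] sop_of_pmf_def stensor_scalar_sop by simp
    qed
    also have "\<dots> = sop_of_pmf (bind_pmf (f n x) (g n))"
      using fin by (simp add: fun_eq_iff sop_of_pmf_def sum_scalar_sop pmf_bind_finite)
    also have "\<dots> = inst_of_kmap X (kcomp X f g) n x"
      using True by (simp add: inst_of_kmap_apply kcomp_def)
    finally show ?thesis .
  qed (simp add: vcomp_def inst_of_kmap_def)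
qed

lemma sop_of_return_pmf: "sop_of_pmf (return_pmf x) = (\<lambda>y. if y = x then trunc 1 else 0)"
  unfolding trunc_1_eq_scalar_sop sop_of_pmf_def
  by (rule ext) (simp add: scalar_sop_0 split: split_indicator)

lemma vid_eq_inst_of_kmap: "vid X = inst_of_kmap X (kid X)"
  by (intro ext restrict_ext) (simp_all add: vid_def inst_of_kmap_def kid_def sop_of_return_pmf)

lemma hcomp_inst_of_kmap:
  "hcomp X1 X2 (inst_of_kmap X1 f) (inst_of_kmap X2 g) =
    inst_of_kmap (sprod X1 X2) (kprod X1 X2 f g)"
proof (rule ext)
  fix n
  have "sop_of_pmf (g n x2) y2 \<circ> sop_of_pmf (f n x1) y1 =
      sop_of_pmf (pair_pmf (f n x1) (g n x2)) (y1, y2)" for x1 x2 y1 y2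
    by (simp add: sop_of_pmf_def scalar_sop_comp pmf_pair)
  then show "hcomp X1 X2 (inst_of_kmap X1 f) (inst_of_kmap X2 g) n =
      inst_of_kmap (sprod X1 X2) (kprod X1 X2 f g) n"
    by (auto simp: hcomp_def inst_of_kmap_def kprod_def sprod_def intro!: restrict_ext)
qed

lemma vcomp_sinst_1_1:
  assumes "sset_closed X" "sset_closed Y" "\<Phi> \<in> sinst 1 1 X Y" "\<Psi> \<in> sinst 1 1 Y Z"
  shows "vcomp 1 1 1 1 X \<Phi> \<Psi> \<in> sinst 1 1 X Z"
    and "dist_of X (vcomp 1 1 1 1 X \<Phi> \<Psi>) = kcomp X (dist_of X \<Phi>) (dist_of Y \<Psi>)"
proof -
  have f: "dist_of X \<Phi> \<in> kmaps X Y" and g: "dist_of Y \<Psi> \<in> kmaps Y Z"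
    using dist_of_kmaps assms by blast+
  then have fg: "kcomp X (dist_of X \<Phi>) (dist_of Y \<Psi>) \<in> kmaps X Z"
    using kcomp_kmaps[OF assms(1)] by blast
  have "vcomp 1 1 1 1 X \<Phi> \<Psi> =
      vcomp 1 1 1 1 X (inst_of_kmap X (dist_of X \<Phi>)) (inst_of_kmap Y (dist_of Y \<Psi>))"
    using sinst_1_1_eq_inst_of_kmap[OF assms(3)] sinst_1_1_eq_inst_of_kmap[OF assms(4)]
    by (rule arg_cong2)
  also have "\<dots> = inst_of_kmap X (kcomp X (dist_of X \<Phi>) (dist_of Y \<Psi>))"
    by (rule vcomp_inst_of_kmap[OF f])
  finally show "vcomp 1 1 1 1 X \<Phi> \<Psi> \<in> sinst 1 1 X Z"
    and "dist_of X (vcomp 1 1 1 1 X \<Phi> \<Psi>) = kcomp X (dist_of X \<Phi>) (dist_of Y \<Psi>)"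
    using inst_of_kmap_sinst[OF assms(1) fg] dist_of_inst_of_kmap[OF fg] by simp_all
qed

lemma vid_sinst_1_1:
  assumes "sset_closed X"
  shows "vid X \<in> sinst 1 1 X X" and "dist_of X (vid X) = kid X"
  unfolding vid_eq_inst_of_kmap
  using inst_of_kmap_sinst[OF assms kid_kmaps[OF assms]]
    dist_of_inst_of_kmap[OF kid_kmaps[OF assms]]
  by simp_all

lemma hcomp_sinst_1_1:
  assumes "sset_closed X1" "sset_closed X2" "\<Phi> \<in> sinst 1 1 X1 Y1" "\<Psi> \<in> sinst 1 1 X2 Y2"
  shows "hcomp X1 X2 \<Phi> \<Psi> \<in> sinst 1 1 (sprod X1 X2) (sprod Y1 Y2)"
    and "dist_of (sprod X1 X2) (hcomp X1 X2 \<Phi> \<Psi>) = kprod X1 X2 (dist_of X1 \<Phi>) (dist_of X2 \<Psi>)"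
proof -
  have fg: "kprod X1 X2 (dist_of X1 \<Phi>) (dist_of X2 \<Psi>) \<in> kmaps (sprod X1 X2) (sprod Y1 Y2)"
    using assms by (intro kprod_kmaps dist_of_kmaps)
  have "hcomp X1 X2 \<Phi> \<Psi> =
      hcomp X1 X2 (inst_of_kmap X1 (dist_of X1 \<Phi>)) (inst_of_kmap X2 (dist_of X2 \<Psi>))"
    using sinst_1_1_eq_inst_of_kmap[OF assms(3)] sinst_1_1_eq_inst_of_kmap[OF assms(4)]
    by (rule arg_cong2)
  also have "\<dots> = inst_of_kmap (sprod X1 X2) (kprod X1 X2 (dist_of X1 \<Phi>) (dist_of X2 \<Psi>))"
    by (rule hcomp_inst_of_kmap)
  finally show "hcomp X1 X2 \<Phi> \<Psi> \<in> sinst 1 1 (sprod X1 X2) (sprod Y1 Y2)"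
    and "dist_of (sprod X1 X2) (hcomp X1 X2 \<Phi> \<Psi>) = kprod X1 X2 (dist_of X1 \<Phi>) (dist_of X2 \<Psi>)"
    using inst_of_kmap_sinst[OF sset_closed_sprod[OF assms(1,2)] fg] dist_of_inst_of_kmap[OF fg]
    by simp_all
qed

theorem proposition6p5:
  shows
  \<comment> \<open>H(sInst) = (Chan, (x), C)\<close>
  "(\<forall>V W. bij_betw chan_of (sinst V W Delta0 Delta0) {\<Phi>. channel V W \<Phi>}) \<and>
   (\<forall>V W U \<Phi> \<Psi>. \<Phi> \<in> sinst V W Delta0 Delta0 \<longrightarrow> \<Psi> \<in> sinst W U Delta0 Delta0 \<longrightarrow>
      hcomp Delta0 Delta0 \<Phi> \<Psi> 0 ((), ()) ((), ()) = chan_of \<Psi> \<circ> chan_of \<Phi>) \<and>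
   (\<forall>V. hid V \<in> sinst V V Delta0 Delta0 \<and> chan_of (hid V) = trunc V) \<and>
   (\<forall>V1 W1 V2 W2 \<Phi> \<Psi>. \<Phi> \<in> sinst V1 W1 Delta0 Delta0 \<longrightarrow> \<Psi> \<in> sinst V2 W2 Delta0 Delta0 \<longrightarrow>
      vcomp V1 W1 V2 W2 Delta0 \<Phi> \<Psi> \<in> sinst (V1 * V2) (W1 * W2) Delta0 Delta0 \<and>
      chan_of (vcomp V1 W1 V2 W2 Delta0 \<Phi> \<Psi>) = stensor V1 W1 V2 W2 (chan_of \<Phi>) (chan_of \<Psi>)) \<and>
   \<comment> \<open>V(sInst) = sSet_D\<close>
   (\<forall>(X :: 'a sset) (Y :: 'b sset). is_sset X \<longrightarrow> is_sset Y \<longrightarrow>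
      bij_betw (dist_of X) (sinst 1 1 X Y) (kmaps X Y)) \<and>
   (\<forall>(X :: 'a sset) (Y :: 'b sset) (Z :: 'c sset) \<Phi> \<Psi>.
      is_sset X \<longrightarrow> is_sset Y \<longrightarrow> is_sset Z \<longrightarrow>
      \<Phi> \<in> sinst 1 1 X Y \<longrightarrow> \<Psi> \<in> sinst 1 1 Y Z \<longrightarrow>
      vcomp 1 1 1 1 X \<Phi> \<Psi> \<in> sinst 1 1 X Z \<and>
      dist_of X (vcomp 1 1 1 1 X \<Phi> \<Psi>) = kcomp X (dist_of X \<Phi>) (dist_of Y \<Psi>)) \<and>
   (\<forall>X :: 'a sset. is_sset X \<longrightarrow> vid X \<in> sinst 1 1 X X \<and> dist_of X (vid X) = kid X) \<and>
   (\<forall>(X1 :: 'a sset) (Y1 :: 'b sset) (X2 :: 'c sset) (Y2 :: 'd sset) \<Phi> \<Psi>.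
      is_sset X1 \<longrightarrow> is_sset Y1 \<longrightarrow> is_sset X2 \<longrightarrow> is_sset Y2 \<longrightarrow>
      \<Phi> \<in> sinst 1 1 X1 Y1 \<longrightarrow> \<Psi> \<in> sinst 1 1 X2 Y2 \<longrightarrow>
      hcomp X1 X2 \<Phi> \<Psi> \<in> sinst 1 1 (sprod X1 X2) (sprod Y1 Y2) \<and>
      dist_of (sprod X1 X2) (hcomp X1 X2 \<Phi> \<Psi>) = kprod X1 X2 (dist_of X1 \<Phi>) (dist_of X2 \<Psi>))"
  by (intro conjI allI impI)
    (blast intro: bij_betw_chan_of hcomp_Delta0 hid_Delta0 vcomp_Delta0_sinst bij_betw_dist_of
      vcomp_sinst_1_1 vid_sinst_1_1 hcomp_sinst_1_1 is_sset_imp_sset_closed)+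

end
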